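(* Let $0\le s<n$, $A\in M_{s+1,n-s}$, and $A'=BA$ for some $B\in\mathrm{GL}_{s+1}(\mathbb Q)$. Then $\omega_j(A')=\omega_j(A)$ for all $j=1,\dots,n-s$.
   Context: Higher order exponents: let $V=\mathbb R^{n+1}$ with basis $e_0,\dots,e_n$, $V_0=\mathrm{span}(e_1,\dots,e_n)$, $V_\bullet=\mathrm{span}(e_{s+1},\dots,e_n)$; $e_I=e_{i_1}\wedge\dots\wedge e_{i_j}$; $\bigwedge(V)$ carries the inner product making $\{e_I\}$ orthonormal. $\mathcal S_{n+1,j}$ is the set of $w=v_1\wedge\dots\wedge v_j$ with $v_1,\dots,v_j\in\mathbb Z^{n+1}$ linearly independent; $\pi_\bullet$ is the orthogonal projection $\bigwedge^jV\to\bigwedge^jV_\bullet$. For a matrix $A\in M_{s+1,n-s}$ with rows indexed $0,\dots,s$ and columns $s+1,\dots,n$, let $a_i=\sum_{k=s+1}^na_{i,k}e_k$ and let $R_Ac(w)\in(\bigwedge^{j-1}V_0)^{s+1}$ have $i$-th component $\sum_{J\subset\{1,\dots,n\},\#J=j-1}\langle(e_i+a_i)\wedge e_J,w\rangle e_J$ (Euclidean norm). For $1\le j\le n-s$, $\omega_j(A)$ is the supremum of $v$ such that there exist $w\in\mathcal S_{n+1,j}$ with arbitrarily large $\|\pi_\bullet(w)\|$ satisfying $\|R_Ac(w)\|<\|\pi_\bullet(w)\|^{-\frac{v+1-j}{j}}$. *)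

theory Defs
  imports "Jordan_Normal_Form.Determinant" "Jordan_Normal_Form.DL_Submatrix"
    "HOL-Library.Extended_Real"
begin

text \<open>Elements of the exterior power of V = R^(n+1) are represented by their coordinates
  with respect to the orthonormal basis e_I (I a subset of {0..n}, e_I the wedge of the
  e_i, i in I, in increasing order): a function from index sets to reals.\<close>

definition multi_idx :: "nat set \<Rightarrow> nat \<Rightarrow> nat set set" where
  "multi_idx X j = {I. I \<subseteq> X \<and> card I = j}"

text \<open>Coordinates of the wedge product of the columns of an (n+1) x j matrix M:
  the coefficient on e_I is the I-minor of M.\<close>
definition wedge_cols :: "nat \<Rightarrow> real mat \<Rightarrow> nat set \<Rightarrow> real" where
  "wedge_cols n M I =
     (if I \<in> multi_idx {0..n} (dim_col M) then det (submatrix M I UNIV) else 0)"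

definition ext_inner :: "nat \<Rightarrow> nat \<Rightarrow> (nat set \<Rightarrow> real) \<Rightarrow> (nat set \<Rightarrow> real) \<Rightarrow> real" where
  "ext_inner n j x y = (\<Sum>I\<in>multi_idx {0..n} j. x I * y I)"

definition ext_norm :: "nat \<Rightarrow> nat \<Rightarrow> (nat set \<Rightarrow> real) \<Rightarrow> real" where
  "ext_norm n j x = sqrt (ext_inner n j x x)"

definition cols_lin_indep :: "real mat \<Rightarrow> bool" where
  "cols_lin_indep M \<longleftrightarrow>
     (\<forall>c \<in> carrier_vec (dim_col M). M *\<^sub>v c = 0\<^sub>v (dim_row M) \<longrightarrow> c = 0\<^sub>v (dim_col M))"

definition S_set :: "nat \<Rightarrow> nat \<Rightarrow> (nat set \<Rightarrow> real) set" where
  "S_set n j = {wedge_cols n (map_mat real_of_int V) | V.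
      V \<in> carrier_mat (n+1) j \<and> cols_lin_indep (map_mat real_of_int V)}"

text \<open>Orthogonal projection onto the j-th exterior power of V_bullet = span(e_{s+1},...,e_n).\<close>
definition proj_bullet :: "nat \<Rightarrow> nat \<Rightarrow> (nat set \<Rightarrow> real) \<Rightarrow> (nat set \<Rightarrow> real)" where
  "proj_bullet n s w = (\<lambda>I. if I \<subseteq> {s+1..n} then w I else 0)"

text \<open>The vector e_i + a_i, where a_i = sum_{k=s+1}^n a_{i,k} e_k; the matrix A has rows
  indexed 0..s and its column number k-(s+1) corresponds to the paper's column index k.\<close>
definition ea_vec :: "nat \<Rightarrow> nat \<Rightarrow> real mat \<Rightarrow> nat \<Rightarrow> real vec" where
  "ea_vec n s A i = vec (n+1) (\<lambda>m. (if m = i then 1 else 0) +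
       (if s < m \<and> m \<le> n then A $$ (i, m - (s+1)) else 0))"

text \<open>The (n+1) x j matrix with columns e_i + a_i, e_{J_1}, ..., e_{J_{j-1}} (J increasing),
  whose wedge is (e_i + a_i) /\ e_J.\<close>
definition RA_mat :: "nat \<Rightarrow> nat \<Rightarrow> nat \<Rightarrow> real mat \<Rightarrow> nat \<Rightarrow> nat set \<Rightarrow> real mat" where
  "RA_mat n s j A i J = mat (n+1) j (\<lambda>(m,q).
      if q = 0 then ea_vec n s A i $ m
      else (if m = sorted_list_of_set J ! (q - 1) then 1 else 0))"

text \<open>Euclidean norm of R_A c(w), an (s+1)-tuple of (j-1)-vectors in the exterior power of V_0.\<close>
definition RA_norm :: "nat \<Rightarrow> nat \<Rightarrow> nat \<Rightarrow> real mat \<Rightarrow> (nat set \<Rightarrow> real) \<Rightarrow> real" where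
  "RA_norm n s j A w = sqrt (\<Sum>i\<in>{0..s}. \<Sum>J\<in>multi_idx {1..n} (j-1).
       (ext_inner n j (wedge_cols n (RA_mat n s j A i J)) w)^2)"

definition omega :: "nat \<Rightarrow> nat \<Rightarrow> nat \<Rightarrow> real mat \<Rightarrow> ereal" where
  "omega n s j A = Sup {ereal v | v. \<forall>M::real. \<exists>w\<in>S_set n j.
       ext_norm n j (proj_bullet n s w) > M \<and>
       RA_norm n s j A w < ext_norm n j (proj_bullet n s w) powr (- (v + 1 - real j) / real j)}"

end

theory Submission
  imports Defs
begin

(* Write A' = B A and G = diag(B, I).  Since G^T (e_i + a'_i) = sum_k B_ik (e_k + a_k) and G fixes
   e_(s+1), ..., e_n, the Cauchy-Binet formula expands every coordinate of R_A' c(G w), where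
   G (v_1 /\ ... /\ v_j) = G v_1 /\ ... /\ G v_j, into pairings of w with
   (e_k + a_k) /\ e_(t 1) /\ ... /\ e_(t (j-1)), t q in {0, ..., n}.  Those with all t q >= 1
   are coordinates of R_A c(w); an index t q = 0 is removed by writing e_0 = (e_0 + a_0) - a_0
   and moving e_0 + a_0 to the front.  Hence |R_A' c(G w)| <= C |R_A c(w)|, while
   pi_bullet(G w) = pi_bullet(w).  Multiplying G by a common denominator d of B makes it
   integral, so w |-> d G w maps S_(n+1,j) into itself and only multiplies the height
   |pi_bullet(w)| by the constant d^j.  Therefore every exponent below omega_j(A) is an exponent
   for A', and B^-1 gives the reverse inequality. *)

section \<open>Determinants of families of rows\<close>

definition det_rows :: "nat \<Rightarrow> (nat \<Rightarrow> nat \<Rightarrow> 'a :: comm_ring_1) \<Rightarrow> 'a" where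
  "det_rows j g = det (mat j j (\<lambda>(q, c). g q c))"

lemma det_rows_cong:
  assumes "\<And>q c. q < j \<Longrightarrow> c < j \<Longrightarrow> g q c = g' q c"
  shows "det_rows j g = det_rows j g'"
  unfolding det_rows_def by (rule arg_cong[where f = det], rule eq_matI) (auto simp: assms)

lemma det_rows_Leibniz:
  "det_rows j g = (\<Sum>p | p permutes {0..<j}. of_int (sign p) * (\<Prod>q = 0..<j. g q (p q)))"
proof -
  have "det_rows j g = (\<Sum>p | p permutes {0..<j}.
      of_int (sign p) * (\<Prod>q = 0..<j. mat j j (\<lambda>(q, c). g q c) $$ (q, p q)))"
    unfolding det_rows_def by (rule det_def') simp
  also have "\<dots> = (\<Sum>p | p permutes {0..<j}. of_int (sign p) * (\<Prod>q = 0..<j. g q (p q)))"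
    by (intro sum.cong refl arg_cong[where f = "\<lambda>x. _ * x"] prod.cong)
      (auto dest: permutes_in_image[THEN iffD2])
  finally show ?thesis .
qed

lemma det_rows_multilinear:
  assumes fin: "\<And>q. q < j \<Longrightarrow> finite (S q)"
    and rows: "\<And>q c. q < j \<Longrightarrow> c < j \<Longrightarrow> g q c = (\<Sum>m\<in>S q. a q m * h q m c)"
  shows "det_rows j g =
    (\<Sum>f\<in>Pi\<^sub>E {0..<j} S. (\<Prod>q = 0..<j. a q (f q)) * det_rows j (\<lambda>q. h q (f q)))"
proof -
  let ?P = "{p. p permutes {0..<j}}"
  have "det_rows j g = (\<Sum>p\<in>?P. of_int (sign p) * (\<Prod>q = 0..<j. \<Sum>m\<in>S q. a q m * h q m (p q)))"
    unfolding det_rows_Leibniz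
    by (intro sum.cong refl arg_cong[where f = "\<lambda>x. _ * x"] prod.cong)
      (auto simp: rows dest: permutes_in_image[THEN iffD2])
  also have "\<dots> = (\<Sum>p\<in>?P. of_int (sign p) *
      (\<Sum>f\<in>Pi\<^sub>E {0..<j} S. \<Prod>q = 0..<j. a q (f q) * h q (f q) (p q)))"
    using fin by (subst prod_sum_PiE) auto
  also have "\<dots> = (\<Sum>p\<in>?P. \<Sum>f\<in>Pi\<^sub>E {0..<j} S.
      (\<Prod>q = 0..<j. a q (f q)) * (of_int (sign p) * (\<Prod>q = 0..<j. h q (f q) (p q))))"
    by (simp add: sum_distrib_left prod.distrib algebra_simps)
  also have "\<dots> = (\<Sum>f\<in>Pi\<^sub>E {0..<j} S. \<Sum>p\<in>?P.
      (\<Prod>q = 0..<j. a q (f q)) * (of_int (sign p) * (\<Prod>q = 0..<j. h q (f q) (p q))))"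
    by (rule sum.swap)
  also have "\<dots> = (\<Sum>f\<in>Pi\<^sub>E {0..<j} S. (\<Prod>q = 0..<j. a q (f q)) * det_rows j (\<lambda>q. h q (f q)))"
    unfolding det_rows_Leibniz by (simp add: sum_distrib_left)
  finally show ?thesis .
qed

lemma det_rows_linear_row:
  assumes "finite S" and r: "r < j"
    and row: "\<And>c. c < j \<Longrightarrow> g r c = (\<Sum>m\<in>S. a m * h m c)"
  shows "det_rows j g = (\<Sum>m\<in>S. a m * det_rows j (g(r := h m)))"
proof -
  have "det_rows j g = (\<Sum>f\<in>Pi\<^sub>E {0..<j} (\<lambda>q. if q = r then S else {undefined}).
      (\<Prod>q = 0..<j. if q = r then a (f q) else 1) *
      det_rows j (\<lambda>q. if q = r then h (f q) else g q))"
    by (rule det_rows_multilinear) (auto simp: assms)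
  also have "\<dots> = (\<Sum>m\<in>S. a m * det_rows j (g(r := h m)))"
  proof (rule sum.reindex_bij_witness[where j = "\<lambda>f. f r" and
        i = "\<lambda>m. \<lambda>q. if q = r then m else undefined"])
    fix f assume f: "f \<in> Pi\<^sub>E {0..<j} (\<lambda>q. if q = r then S else {undefined})"
    show "(\<lambda>q. if q = r then f r else undefined) = f"
    proof
      fix q show "(if q = r then f r else undefined) = f q"
      proof (cases "q < j")
        case True
        then have "f q \<in> (if q = r then S else {undefined})"
          using f by (simp add: PiE_iff)
        then show ?thesis by auto
      qed (use f r in \<open>auto simp: PiE_iff extensional_def\<close>)
    qed
    show "a (f r) * det_rows j (g(r := h (f r))) =
        (\<Prod>q = 0..<j. if q = r then a (f q) else 1) * det_rows j (\<lambda>q. if q = r then h (f q) else g q)"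
      using r by (simp add: prod.delta' fun_upd_def cong: if_cong)
  qed (use r in \<open>auto simp: PiE_def extensional_def Pi_iff dest: bspec[of _ _ r]\<close>)
  finally show ?thesis .
qed

lemma det_rows_identical_rows:
  assumes "q1 \<noteq> q2" "q1 < j" "q2 < j" "\<And>c. c < j \<Longrightarrow> g q1 c = g q2 c"
  shows "det_rows j g = 0"
  unfolding det_rows_def
  by (rule det_identical_rows[OF _ assms(1-3)]) (auto intro!: eq_vecI simp: assms(2-4))

lemma det_rows_permute_rows:
  assumes "p permutes {0..<j}"
  shows "det_rows j (\<lambda>q. g (p q)) = of_int (sign p) * det_rows j g"
proof -
  have p: "p q < j" if "q < j" for q
    using permutes_in_image[OF assms] that by simp
  have "det_rows j (\<lambda>q. g (p q)) = det (mat j j (\<lambda>(q, c). mat j j (\<lambda>(q, c). g q c) $$ (p q, c)))"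
    unfolding det_rows_def
    by (rule arg_cong[where f = det], rule eq_matI) (auto simp: p)
  also have "\<dots> = of_int (sign p) * det_rows j g"
    unfolding det_rows_def by (rule det_permute_rows[OF _ assms]) simp
  finally show ?thesis .
qed

lemma abs_sum_mult_le:
  fixes a X :: "'b \<Rightarrow> real"
  assumes "\<And>m. m \<in> S \<Longrightarrow> \<bar>X m\<bar> \<le> K"
  shows "\<bar>\<Sum>m\<in>S. a m * X m\<bar> \<le> (\<Sum>m\<in>S. \<bar>a m\<bar>) * K"
proof -
  have "\<bar>\<Sum>m\<in>S. a m * X m\<bar> \<le> (\<Sum>m\<in>S. \<bar>a m\<bar> * \<bar>X m\<bar>)"
    using sum_abs[of "\<lambda>m. a m * X m" S] by (simp add: abs_mult)
  also have "\<dots> \<le> (\<Sum>m\<in>S. \<bar>a m\<bar> * K)"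
    using assms by (intro sum_mono mult_left_mono) auto
  finally show ?thesis
    by (simp add: sum_distrib_right)
qed

lemma abs_det_rows_le_multilinear:
  fixes g :: "nat \<Rightarrow> nat \<Rightarrow> real"
  assumes fin: "\<And>q. q < j \<Longrightarrow> finite (S q)"
    and rows: "\<And>q c. q < j \<Longrightarrow> c < j \<Longrightarrow> g q c = (\<Sum>m\<in>S q. a q m * h q m c)"
    and bound: "\<And>f. f \<in> Pi\<^sub>E {0..<j} S \<Longrightarrow> \<bar>det_rows j (\<lambda>q. h q (f q))\<bar> \<le> K"
  shows "\<bar>det_rows j g\<bar> \<le> (\<Prod>q = 0..<j. \<Sum>m\<in>S q. \<bar>a q m\<bar>) * K"
proof -
  have "det_rows j g =
      (\<Sum>f\<in>Pi\<^sub>E {0..<j} S. (\<Prod>q = 0..<j. a q (f q)) * det_rows j (\<lambda>q. h q (f q)))"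
    using fin rows by (rule det_rows_multilinear)
  also have "\<bar>\<dots>\<bar> \<le> (\<Sum>f\<in>Pi\<^sub>E {0..<j} S. \<bar>\<Prod>q = 0..<j. a q (f q)\<bar>) * K"
    using bound by (intro abs_sum_mult_le) auto
  also have "(\<Sum>f\<in>Pi\<^sub>E {0..<j} S. \<bar>\<Prod>q = 0..<j. a q (f q)\<bar>) = (\<Prod>q = 0..<j. \<Sum>m\<in>S q. \<bar>a q m\<bar>)"
    using fin by (subst prod_sum_PiE) (auto simp: abs_prod)
  finally show ?thesis .
qed

section \<open>The Cauchy--Binet formula\<close>

lemma bij_betw_pick:
  assumes "finite I"
  shows "bij_betw (pick I) {0..<card I} I"
proof (rule bij_betw_byWitness[where f' = "\<lambda>x. card {a \<in> I. a < x}"])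
  show "\<forall>i\<in>{0..<card I}. card {a \<in> I. a < pick I i} = i"
    by (simp add: card_pick_le)
  show "\<forall>x\<in>I. pick I (card {a \<in> I. a < x}) = x"
    by (simp add: pick_card_in_set)
  show "pick I ` {0..<card I} \<subseteq> I"
    by (auto intro: pick_in_set_le)
  show "(\<lambda>x. card {a \<in> I. a < x}) ` I \<subseteq> {0..<card I}"
    using assms by (auto intro!: psubset_card_mono)
qed

lemma permutes_of_bij_betw:
  assumes "bij_betw e A K" and "bij_betw t A K"
  shows "(\<lambda>x. if x \<in> A then inv_into A e (t x) else x) permutes A"
proof (rule bij_imp_permutes)
  have "bij_betw (inv_into A e \<circ> t) A A"
    using assms by (blast intro: bij_betw_trans bij_betw_inv_into)
  then show "bij_betw (\<lambda>x. if x \<in> A then inv_into A e (t x) else x) A A"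
    by (rule bij_betw_cong[THEN iffD1, rotated]) auto
qed simp

lemma sum_bij_betw_eq_sum_permutes:
  assumes e: "bij_betw e A I"
  shows "(\<Sum>f \<in> {f \<in> extensional A. bij_betw f A I}. F f) =
    (\<Sum>p | p permutes A. F (restrict (e \<circ> p) A))"
proof (rule sum.reindex_bij_witness[where j = "\<lambda>f x. if x \<in> A then inv_into A e (f x) else x"
      and i = "\<lambda>p. restrict (e \<circ> p) A"])
  fix f assume f: "f \<in> {f \<in> extensional A. bij_betw f A I}"
  then have fx: "f x \<in> e ` A" if "x \<in> A" for x
    using e that by (auto simp: bij_betw_def)
  show "restrict (e \<circ> (\<lambda>x. if x \<in> A then inv_into A e (f x) else x)) A = f"
    using f by (auto simp: fun_eq_iff f_inv_into_f[OF fx] extensional_def)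
  then show "F (restrict (e \<circ> (\<lambda>x. if x \<in> A then inv_into A e (f x) else x)) A) = F f"
    by simp
  show "(\<lambda>x. if x \<in> A then inv_into A e (f x) else x) \<in> {p. p permutes A}"
    using permutes_of_bij_betw[OF e] f by simp
next
  fix p assume "p \<in> {p. p permutes A}"
  then have p: "p permutes A" by simp
  have "inj_on e A"
    using e by (simp add: bij_betw_def)
  then show "(\<lambda>x. if x \<in> A then inv_into A e (restrict (e \<circ> p) A x) else x) = p"
    using p by (auto simp: fun_eq_iff permutes_in_image permutes_not_in)
  have "bij_betw (e \<circ> p) A I"
    using p e by (blast intro: bij_betw_trans permutes_imp_bij)
  then show "restrict (e \<circ> p) A \<in> {f \<in> extensional A. bij_betw f A I}"
    by (simp add: bij_betw_cong[of A "restrict (e \<circ> p) A" "e \<circ> p"])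
qed

lemma submatrix_rows_eq:
  assumes M: "M \<in> carrier_mat N j" and I: "I \<subseteq> {0..<N}" "card I = j"
  shows "submatrix M I UNIV = mat j j (\<lambda>(q, c). M $$ (pick I q, c))"
proof -
  have rows: "{i. i < dim_row M \<and> i \<in> I} = I" and cols: "{i. i < dim_col M \<and> i \<in> UNIV} = {0..<j}"
    using M I by auto
  show ?thesis
    by (rule eq_matI) (use M I in \<open>auto simp: dim_submatrix rows cols submatrix_index pick_UNIV\<close>)
qed

lemma sum_bij_betw_eq_minor_product:
  fixes M V :: "'a :: comm_ring_1 mat"
  assumes M: "M \<in> carrier_mat N j" and V: "V \<in> carrier_mat N j" and I: "I \<subseteq> {0..<N}" "card I = j"
  shows "(\<Sum>f \<in> {f \<in> extensional {0..<j}. bij_betw f {0..<j} I}.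
      (\<Prod>q = 0..<j. M $$ (f q, q)) * det_rows j (\<lambda>q c. V $$ (f q, c))) =
    det (submatrix M I UNIV) * det (submatrix V I UNIV)"
proof -
  have pick: "bij_betw (pick I) {0..<j} I"
    using bij_betw_pick[of I] finite_subset[OF I(1)] I(2) by simp
  have "(\<Sum>f \<in> {f \<in> extensional {0..<j}. bij_betw f {0..<j} I}.
      (\<Prod>q = 0..<j. M $$ (f q, q)) * det_rows j (\<lambda>q c. V $$ (f q, c))) =
      (\<Sum>p | p permutes {0..<j}. (\<Prod>q = 0..<j. M $$ (pick I (p q), q)) *
        det_rows j (\<lambda>q. (\<lambda>q c. V $$ (pick I q, c)) (p q)))"
    unfolding sum_bij_betw_eq_sum_permutes[OF pick] by (intro sum.cong refl arg_cong2[where f = times] det_rows_cong) auto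
  also have "\<dots> = (\<Sum>p | p permutes {0..<j}. of_int (sign p) * (\<Prod>q = 0..<j. M $$ (pick I (p q), q))) *
      det_rows j (\<lambda>q c. V $$ (pick I q, c))"
    unfolding sum_distrib_right
  proof (rule sum.cong[OF refl])
    fix p assume "p \<in> {p. p permutes {0..<j}}"
    then show "(\<Prod>q = 0..<j. M $$ (pick I (p q), q)) * det_rows j (\<lambda>q. (\<lambda>q c. V $$ (pick I q, c)) (p q)) =
        of_int (sign p) * (\<Prod>q = 0..<j. M $$ (pick I (p q), q)) * det_rows j (\<lambda>q c. V $$ (pick I q, c))"
      by (simp add: det_rows_permute_rows[of p j "\<lambda>q c. V $$ (pick I q, c)"])
  qed
  also have "\<dots> = det_rows j (\<lambda>q c. M $$ (pick I c, q)) * det_rows j (\<lambda>q c. V $$ (pick I q, c))"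
    by (simp only: det_rows_Leibniz)
  also have "det_rows j (\<lambda>q c. M $$ (pick I c, q)) = det (transpose_mat (submatrix M I UNIV))"
    unfolding det_rows_def submatrix_rows_eq[OF M I] by (rule arg_cong[where f = det]) auto
  also have "\<dots> = det (submatrix M I UNIV)"
    by (rule det_transpose[of _ j]) (simp add: submatrix_rows_eq[OF M I])
  also have "det_rows j (\<lambda>q c. V $$ (pick I q, c)) = det (submatrix V I UNIV)"
    unfolding det_rows_def submatrix_rows_eq[OF V I] ..
  finally show ?thesis .
qed

theorem Cauchy_Binet:
  fixes M V :: "'a :: comm_ring_1 mat"
  assumes M: "M \<in> carrier_mat N j" and V: "V \<in> carrier_mat N j"
  shows "det (transpose_mat M * V) =
    (\<Sum>I\<in>multi_idx {0..<N} j. det (submatrix M I UNIV) * det (submatrix V I UNIV))"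
proof -
  let ?F = "Pi\<^sub>E {0..<j} (\<lambda>_. {0..<N})"
  let ?Fi = "{f \<in> ?F. inj_on f {0..<j}}"
  let ?h = "\<lambda>f. (\<Prod>q = 0..<j. M $$ (f q, q)) * det_rows j (\<lambda>q c. V $$ (f q, c))"
  have fin: "finite ?F"
    by (simp add: finite_PiE)
  have "det (transpose_mat M * V) = det_rows j (\<lambda>q c. \<Sum>m\<in>{0..<N}. M $$ (m, q) * V $$ (m, c))"
    unfolding det_rows_def
    by (rule arg_cong[where f = det], rule eq_matI) (use M V in \<open>auto simp: scalar_prod_def\<close>)
  also have "\<dots> = sum ?h ?F"
    by (rule det_rows_multilinear) auto
  also have "\<dots> = sum ?h ?Fi"
  proof (rule sum.mono_neutral_right[OF fin])
    show "\<forall>f\<in>?F - ?Fi. ?h f = 0"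
    proof
      fix f assume "f \<in> ?F - ?Fi"
      then obtain q1 q2 where "q1 \<noteq> q2" "q1 < j" "q2 < j" "f q1 = f q2"
        by (auto simp: inj_on_def)
      then show "?h f = 0"
        by (simp add: det_rows_identical_rows)
    qed
  qed auto
  also have "\<dots> = (\<Sum>I\<in>multi_idx {0..<N} j. sum ?h {f \<in> ?Fi. f ` {0..<j} = I})"
  proof (rule sum.group[symmetric])
    show "(\<lambda>f. f ` {0..<j}) ` ?Fi \<subseteq> multi_idx {0..<N} j"
      by (auto simp: multi_idx_def card_image PiE_iff)
  qed (auto simp: fin multi_idx_def intro: finite_subset[of _ "Pow {0..<N}"])
  also have "\<dots> = (\<Sum>I\<in>multi_idx {0..<N} j. det (submatrix M I UNIV) * det (submatrix V I UNIV))"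
  proof (rule sum.cong[OF refl])
    fix I assume "I \<in> multi_idx {0..<N} j"
    then have I: "I \<subseteq> {0..<N}" "card I = j"
      by (auto simp: multi_idx_def)
    have "{f \<in> ?Fi. f ` {0..<j} = I} = {f \<in> extensional {0..<j}. bij_betw f {0..<j} I}"
      using I(1) by (auto simp: bij_betw_def PiE_iff)
    then show "sum ?h {f \<in> ?Fi. f ` {0..<j} = I} = det (submatrix M I UNIV) * det (submatrix V I UNIV)"
      using sum_bij_betw_eq_minor_product[OF M V I] by simp
  qed
  finally show ?thesis .
qed

lemma ext_inner_wedge_cols:
  assumes "M \<in> carrier_mat (n+1) j" and "V \<in> carrier_mat (n+1) j"
  shows "ext_inner n j (wedge_cols n M) (wedge_cols n V) = det (transpose_mat M * V)"
proof -
  have "{0..n} = {0..<n+1}" by auto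
  then show ?thesis
    using assms unfolding Cauchy_Binet[OF assms] ext_inner_def wedge_cols_def
    by (auto intro!: sum.cong)
qed

section \<open>The coordinates of \<open>R\<^sub>A c(w)\<close> as determinants\<close>

text \<open>Column \<open>q \<ge> 1\<close> of \<open>RA_mat n s j A i J\<close> is \<open>e\<^bsub>sorted_idx J q\<^esub>\<close>; column 0 is \<open>e\<^sub>i + a\<^sub>i\<close>.\<close>
definition sorted_idx :: "nat set \<Rightarrow> nat \<Rightarrow> nat" where
  "sorted_idx J q = sorted_list_of_set J ! (q - 1)"

definition ea_row :: "nat \<Rightarrow> nat \<Rightarrow> real mat \<Rightarrow> real mat \<Rightarrow> nat \<Rightarrow> nat \<Rightarrow> real" where
  "ea_row n s A V k c = (\<Sum>l = 0..n. ea_vec n s A k $ l * V $$ (l, c))"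

text \<open>By Cauchy--Binet this is the pairing of \<open>(e\<^sub>k + a\<^sub>k) \<and> e\<^bsub>t 1\<^esub> \<and> \<dots> \<and> e\<^bsub>t (j - 1)\<^esub>\<close>
  with the wedge of the columns of \<open>V\<close>.\<close>
definition ea_pairing :: "nat \<Rightarrow> nat \<Rightarrow> nat \<Rightarrow> real mat \<Rightarrow> real mat \<Rightarrow> nat \<Rightarrow> (nat \<Rightarrow> nat) \<Rightarrow> real"
  where "ea_pairing n s j A V k t =
    det_rows j (\<lambda>q c. if q = 0 then ea_row n s A V k c else V $$ (t q, c))"

lemma bij_betw_sorted_idx:
  assumes "finite J" and "card J = j - 1"
  shows "bij_betw (sorted_idx J) {1..<j} J"
proof -
  have "bij_betw (\<lambda>q. q - 1) {1..<j} {..<j - 1}"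
    by (rule bij_betw_byWitness[where f' = Suc]) auto
  moreover have "bij_betw ((!) (sorted_list_of_set J)) {..<j - 1} J"
    using assms by (intro bij_betw_nth) auto
  ultimately show ?thesis
    unfolding sorted_idx_def by (rule bij_betw_trans[unfolded comp_def])
qed

lemma sorted_idx_mem:
  assumes "J \<in> multi_idx {1..n} (j - 1)" and "q \<in> {1..<j}"
  shows "sorted_idx J q \<in> J" and "1 \<le> sorted_idx J q" and "sorted_idx J q \<le> n"
proof -
  have J: "finite J" "card J = j - 1" "J \<subseteq> {1..n}"
    using assms(1) by (auto simp: multi_idx_def intro: finite_subset)
  show mem: "sorted_idx J q \<in> J"
    using bij_betw_apply[OF bij_betw_sorted_idx[OF J(1,2)] assms(2)] .
  show "1 \<le> sorted_idx J q" and "sorted_idx J q \<le> n"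
    using mem J(3) by auto
qed

lemma RA_mat_pairing:
  assumes V: "V \<in> carrier_mat (n+1) j" and J: "J \<in> multi_idx {1..n} (j - 1)"
  shows "det (transpose_mat (RA_mat n s j A i J) * V) = ea_pairing n s j A V i (sorted_idx J)"
  unfolding ea_pairing_def det_rows_def
proof (rule arg_cong[where f = det], rule eq_matI)
  fix q c assume "q < dim_row (mat j j (\<lambda>(q, c). if q = 0 then ea_row n s A V i c else V $$ (sorted_idx J q, c)))"
    and "c < dim_col (mat j j (\<lambda>(q, c). if q = 0 then ea_row n s A V i c else V $$ (sorted_idx J q, c)))"
  then have qc: "q < j" "c < j" by auto
  have "(transpose_mat (RA_mat n s j A i J) * V) $$ (q, c) =
      (\<Sum>m = 0..n. RA_mat n s j A i J $$ (m, q) * V $$ (m, c))"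
    using V qc by (auto simp: RA_mat_def scalar_prod_def atLeastLessThanSuc_atLeastAtMost intro!: sum.cong)
  also have "\<dots> = (if q = 0 then ea_row n s A V i c else V $$ (sorted_idx J q, c))"
  proof (cases "q = 0")
    case False
    then have "sorted_list_of_set J ! (q - 1) \<le> n"
      using sorted_idx_mem[OF J] qc by (simp add: sorted_idx_def)
    then show ?thesis
      using qc False by (simp add: RA_mat_def sorted_idx_def if_distrib[of "\<lambda>x. x * _"] sum.delta cong: if_cong)
  qed (use qc in \<open>simp add: RA_mat_def ea_row_def\<close>)
  finally show "(transpose_mat (RA_mat n s j A i J) * V) $$ (q, c) =
      mat j j (\<lambda>(q, c). if q = 0 then ea_row n s A V i c else V $$ (sorted_idx J q, c)) $$ (q, c)"
    using qc by simp
qed (use V in \<open>auto simp: RA_mat_def\<close>)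

lemma RA_norm_wedge_cols:
  assumes V: "V \<in> carrier_mat (n+1) j"
  shows "RA_norm n s j A (wedge_cols n V) =
    sqrt (\<Sum>i = 0..s. \<Sum>J\<in>multi_idx {1..n} (j - 1). (ea_pairing n s j A V i (sorted_idx J))\<^sup>2)"
proof -
  have "RA_mat n s j A i J \<in> carrier_mat (n+1) j" for i J
    by (simp add: RA_mat_def)
  then show ?thesis
    unfolding RA_norm_def
    by (auto simp: ext_inner_wedge_cols[OF _ V] RA_mat_pairing[OF V] intro!: arg_cong[where f = sqrt] sum.cong)
qed

lemma RA_norm_nonneg: "0 \<le> RA_norm n s j A w"
  unfolding RA_norm_def by (simp add: sum_nonneg)

lemma abs_le_sqrt_sum_squares:
  fixes F :: "'a \<Rightarrow> 'b \<Rightarrow> real"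
  assumes "finite X" "\<And>i. finite (Y i)" "i \<in> X" "J \<in> Y i"
  shows "\<bar>F i J\<bar> \<le> sqrt (\<Sum>i\<in>X. \<Sum>J\<in>Y i. (F i J)\<^sup>2)"
proof -
  have "(F i J)\<^sup>2 \<le> (\<Sum>J\<in>Y i. (F i J)\<^sup>2)"
    using assms by (intro member_le_sum) auto
  also have "\<dots> \<le> (\<Sum>i\<in>X. \<Sum>J\<in>Y i. (F i J)\<^sup>2)"
    using assms by (intro member_le_sum[of i X "\<lambda>i. \<Sum>J\<in>Y i. (F i J)\<^sup>2"] sum_nonneg) auto
  finally show ?thesis
    by (simp add: real_le_rsqrt)
qed

lemma abs_det_rows_permute_rows:
  fixes g :: "nat \<Rightarrow> nat \<Rightarrow> 'a :: linordered_idom"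
  assumes "p permutes {0..<j}"
  shows "\<bar>det_rows j (\<lambda>q. g (p q))\<bar> = \<bar>det_rows j g\<bar>"
  by (simp add: det_rows_permute_rows[OF assms] abs_mult sign_def)

lemma abs_ea_pairing_le_RA_norm:
  assumes V: "V \<in> carrier_mat (n+1) j" and k: "k \<le> s" and t: "t ` {1..<j} \<subseteq> {1..n}"
  shows "\<bar>ea_pairing n s j A V k t\<bar> \<le> RA_norm n s j A (wedge_cols n V)"
proof (cases "inj_on t {1..<j}")
  case False
  then obtain q1 q2 where "q1 \<in> {1..<j}" "q2 \<in> {1..<j}" "q1 \<noteq> q2" "t q1 = t q2"
    by (auto simp: inj_on_def)
  then have "ea_pairing n s j A V k t = 0"
    unfolding ea_pairing_def by (intro det_rows_identical_rows[of q1 q2]) auto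
  then show ?thesis
    using RA_norm_nonneg by simp
next
  case True
  define K where "K = t ` {1..<j}"
  have K: "K \<in> multi_idx {1..n} (j - 1)"
    using t True by (simp add: K_def multi_idx_def card_image)
  then have e: "bij_betw (sorted_idx K) {1..<j} K"
    by (intro bij_betw_sorted_idx) (auto simp: multi_idx_def intro: finite_subset)
  have "bij_betw t {1..<j} K"
    using True by (simp add: K_def bij_betw_def)
  text \<open>\<open>p\<close> sorts the values of \<open>t\<close>: \<open>t = sorted_idx K \<circ> p\<close> on \<open>{1..<j}\<close>.\<close>
  define p where "p = (\<lambda>q. if q \<in> {1..<j} then inv_into {1..<j} (sorted_idx K) (t q) else q)"
  have p1: "p permutes {1..<j}"
    unfolding p_def by (rule permutes_of_bij_betw[OF e]) fact
  then have p: "p permutes {0..<j}"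
    by (rule permutes_subset) auto
  have tp: "p q \<in> {1..<j} \<and> sorted_idx K (p q) = t q" if "q \<in> {1..<j}" for q
  proof -
    have "t q \<in> sorted_idx K ` {1..<j}"
      using that e by (auto simp: bij_betw_def K_def)
    then show ?thesis
      using that inv_into_into[of "t q" "sorted_idx K" "{1..<j}"] by (simp add: p_def f_inv_into_f)
  qed
  let ?g = "\<lambda>q c. if q = 0 then ea_row n s A V k c else V $$ (sorted_idx K q, c)"
  have "ea_pairing n s j A V k t = det_rows j (\<lambda>q. ?g (p q))"
    unfolding ea_pairing_def
  proof (rule det_rows_cong)
    fix q c assume "q < j"
    then show "(if q = 0 then ea_row n s A V k c else V $$ (t q, c)) = ?g (p q) c"
      using tp[of q] by (cases "q = 0") (auto simp: p_def)
  qed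
  then have "\<bar>ea_pairing n s j A V k t\<bar> = \<bar>ea_pairing n s j A V k (sorted_idx K)\<bar>"
    using abs_det_rows_permute_rows[OF p, of ?g] by (simp add: ea_pairing_def)
  also have "\<dots> \<le> sqrt (\<Sum>i = 0..s. \<Sum>J\<in>multi_idx {1..n} (j - 1). (ea_pairing n s j A V i (sorted_idx J))\<^sup>2)"
    using k K by (intro abs_le_sqrt_sum_squares) (auto simp: multi_idx_def intro: finite_subset)
  finally show ?thesis
    by (simp add: RA_norm_wedge_cols[OF V])
qed

definition entry_abs_sum :: "nat \<Rightarrow> nat \<Rightarrow> real mat \<Rightarrow> real" where
  "entry_abs_sum n s A = (\<Sum>i = 0..s. \<Sum>l = s+1..n. \<bar>A $$ (i, l - (s+1))\<bar>)"

lemma entry_abs_sum_nonneg: "0 \<le> entry_abs_sum n s A"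
  unfolding entry_abs_sum_def by (simp add: sum_nonneg)

lemma ea_vec_nth:
  "l \<le> n \<Longrightarrow> ea_vec n s A k $ l = (if l = k then 1 else 0) + (if s < l then A $$ (k, l - (s+1)) else 0)"
  unfolding ea_vec_def by simp

lemma ea_row_eq_sum_support:
  assumes "k \<le> s" and "s < n"
  shows "ea_row n s A V k c = (\<Sum>m\<in>insert k {s+1..n}. ea_vec n s A k $ m * V $$ (m, c))"
  unfolding ea_row_def using assms by (intro sum.mono_neutral_right) (auto simp: ea_vec_nth)

lemma sum_abs_ea_vec_le:
  assumes "k \<le> s" and "s < n"
  shows "(\<Sum>m\<in>insert k {s+1..n}. \<bar>ea_vec n s A k $ m\<bar>) \<le> 1 + entry_abs_sum n s A"
proof -
  have "(\<Sum>m\<in>insert k {s+1..n}. \<bar>ea_vec n s A k $ m\<bar>) = 1 + (\<Sum>l = s+1..n. \<bar>A $$ (k, l - (s+1))\<bar>)"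
    using assms by (simp add: ea_vec_nth)
  also have "(\<Sum>l = s+1..n. \<bar>A $$ (k, l - (s+1))\<bar>) \<le> entry_abs_sum n s A"
    unfolding entry_abs_sum_def using assms(1)
    by (intro member_le_sum[of k "{0..s}" "\<lambda>i. \<Sum>l = s+1..n. \<bar>A $$ (i, l - (s+1))\<bar>"] sum_nonneg) auto
  finally show ?thesis by simp
qed

lemma abs_det_rows_two_ea_rows_le:
  assumes V: "V \<in> carrier_mat (n+1) j" and k: "k \<le> s" and "s < n"
    and q0: "q0 \<in> {1..<j}" and t: "t ` ({1..<j} - {q0}) \<subseteq> {1..n}"
  shows "\<bar>det_rows j (\<lambda>q c. if q = 0 then ea_row n s A V k c
      else if q = q0 then ea_row n s A V 0 c else V $$ (t q, c))\<bar>
    \<le> (1 + entry_abs_sum n s A) * RA_norm n s j A (wedge_cols n V)"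
    (is "\<bar>det_rows j ?g\<bar> \<le> _ * ?RA")
proof (cases "k = 0")
  case True
  then have "det_rows j ?g = 0"
    using q0 by (intro det_rows_identical_rows[of 0 q0]) auto
  then show ?thesis
    using entry_abs_sum_nonneg RA_norm_nonneg by simp
next
  case False
  let ?swap = "Transposition.transpose 0 q0"
  have swap: "?swap permutes {0..<j}"
    using q0 by (intro permutes_swap_id) auto
  have expand: "det_rows j ?g =
      (\<Sum>m\<in>insert k {s+1..n}. ea_vec n s A k $ m * det_rows j (?g(0 := \<lambda>c. V $$ (m, c))))"
    using q0 by (intro det_rows_linear_row) (simp_all add: ea_row_eq_sum_support[OF k \<open>s < n\<close>])
  have "\<bar>\<Sum>m\<in>insert k {s+1..n}. ea_vec n s A k $ m * det_rows j (?g(0 := \<lambda>c. V $$ (m, c)))\<bar>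
      \<le> (\<Sum>m\<in>insert k {s+1..n}. \<bar>ea_vec n s A k $ m\<bar>) * ?RA"
  proof (rule abs_sum_mult_le)
    fix m assume m: "m \<in> insert k {s+1..n}"
    text \<open>Swapping rows \<open>0\<close> and \<open>q0\<close> puts \<open>e\<^sub>0 + a\<^sub>0\<close> in front; the remaining rows avoid \<open>e\<^sub>0\<close>.\<close>
    have "det_rows j (\<lambda>q. (?g(0 := \<lambda>c. V $$ (m, c))) (?swap q)) = ea_pairing n s j A V 0 (t(q0 := m))"
      unfolding ea_pairing_def
    proof (rule det_rows_cong)
      fix q c
      show "(?g(0 := \<lambda>c. V $$ (m, c))) (?swap q) c =
          (if q = 0 then ea_row n s A V 0 c else V $$ ((t(q0 := m)) q, c))"
        using q0 by (cases "q = 0"; cases "q = q0") (simp_all add: Transposition.transpose_def)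
    qed
    moreover have "\<bar>ea_pairing n s j A V 0 (t(q0 := m))\<bar> \<le> ?RA"
      using t m False k \<open>s < n\<close> by (intro abs_ea_pairing_le_RA_norm[OF V]) auto
    ultimately show "\<bar>det_rows j (?g(0 := \<lambda>c. V $$ (m, c)))\<bar> \<le> ?RA"
      using abs_det_rows_permute_rows[OF swap, of "?g(0 := \<lambda>c. V $$ (m, c))"] by linarith
  qed
  also have "\<dots> \<le> (1 + entry_abs_sum n s A) * ?RA"
    using sum_abs_ea_vec_le[OF k \<open>s < n\<close>] RA_norm_nonneg by (rule mult_right_mono)
  finally show ?thesis
    unfolding expand .
qed

lemma abs_ea_pairing_le_single_e0:
  assumes V: "V \<in> carrier_mat (n+1) j" and k: "k \<le> s" and "s < n"
    and q0: "q0 \<in> {1..<j}" "t q0 = 0" and t: "t ` ({1..<j} - {q0}) \<subseteq> {1..n}"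
  shows "\<bar>ea_pairing n s j A V k t\<bar> \<le> (1 + entry_abs_sum n s A)\<^sup>2 * RA_norm n s j A (wedge_cols n V)"
proof -
  let ?RA = "RA_norm n s j A (wedge_cols n V)" and ?c = "1 + entry_abs_sum n s A"
  let ?g = "\<lambda>q c. if q = 0 then ea_row n s A V k c else V $$ (t q, c)"
  let ?a = "\<lambda>m. if m = 0 then 1 else - ea_vec n s A 0 $ m"
  let ?h = "\<lambda>m c. if m = 0 then ea_row n s A V 0 c else V $$ (m, c)"
  have c: "1 \<le> ?c"
    using entry_abs_sum_nonneg by simp
  have RA_le: "?RA \<le> ?c * ?RA"
    using c RA_norm_nonneg[of n s j A "wedge_cols n V"] by (simp add: mult_le_cancel_right1)
  text \<open>Row \<open>q0\<close> is \<open>e\<^sub>0 = (e\<^sub>0 + a\<^sub>0) - a\<^sub>0\<close> with \<open>a\<^sub>0\<close> supported on \<open>e\<^bsub>s+1\<^esub>, \<dots>, e\<^sub>n\<close>.\<close>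
  have row: "V $$ (0, c) = (\<Sum>m\<in>insert 0 {s+1..n}. ?a m * ?h m c)" for c
    using ea_row_eq_sum_support[of 0 s n A V c] \<open>s < n\<close> by (simp add: ea_vec_nth sum_negf)
  have expand: "ea_pairing n s j A V k t = (\<Sum>m\<in>insert 0 {s+1..n}. ?a m * det_rows j (?g(q0 := ?h m)))"
    unfolding ea_pairing_def using q0 row by (intro det_rows_linear_row) auto
  have bound: "\<bar>\<Sum>m\<in>insert 0 {s+1..n}. ?a m * det_rows j (?g(q0 := ?h m))\<bar>
      \<le> (\<Sum>m\<in>insert 0 {s+1..n}. \<bar>?a m\<bar>) * (?c * ?RA)"
  proof (rule abs_sum_mult_le)
    fix m assume m: "m \<in> insert 0 {s+1..n}"
    show "\<bar>det_rows j (?g(q0 := ?h m))\<bar> \<le> ?c * ?RA"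
    proof (cases "m = 0")
      case True
      then have "det_rows j (?g(q0 := ?h m)) = det_rows j (\<lambda>q c. if q = 0 then ea_row n s A V k c
          else if q = q0 then ea_row n s A V 0 c else V $$ (t q, c))"
        using q0 by (intro det_rows_cong) auto
      then show ?thesis
        using abs_det_rows_two_ea_rows_le[OF V k \<open>s < n\<close> q0(1) t] by simp
    next
      case False
      then have "det_rows j (?g(q0 := ?h m)) = ea_pairing n s j A V k (t(q0 := m))"
        unfolding ea_pairing_def using q0 by (intro det_rows_cong) auto
      moreover have "\<bar>ea_pairing n s j A V k (t(q0 := m))\<bar> \<le> ?RA"
        using t m False by (intro abs_ea_pairing_le_RA_norm[OF V k]) auto
      ultimately show ?thesis
        using RA_le by simp
    qed
  qed
  have "(\<Sum>m\<in>insert 0 {s+1..n}. \<bar>?a m\<bar>) = (\<Sum>m\<in>insert 0 {s+1..n}. \<bar>ea_vec n s A 0 $ m\<bar>)"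
    using \<open>s < n\<close> by (intro sum.cong) (auto simp: ea_vec_nth)
  also have "\<dots> \<le> ?c"
    using \<open>s < n\<close> by (intro sum_abs_ea_vec_le) auto
  finally have "(\<Sum>m\<in>insert 0 {s+1..n}. \<bar>?a m\<bar>) * (?c * ?RA) \<le> ?c * (?c * ?RA)"
    using c RA_norm_nonneg by (intro mult_right_mono) auto
  then show ?thesis
    using bound by (simp add: expand power2_eq_square mult.assoc)
qed

lemma abs_ea_pairing_le:
  assumes V: "V \<in> carrier_mat (n+1) j" and k: "k \<le> s" and "s < n" and t: "t ` {1..<j} \<subseteq> {0..n}"
  shows "\<bar>ea_pairing n s j A V k t\<bar> \<le> (1 + entry_abs_sum n s A)\<^sup>2 * RA_norm n s j A (wedge_cols n V)"
proof (cases "0 \<in> t ` {1..<j}")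
  case False
  have "t ` {1..<j} \<subseteq> {1..n}"
  proof
    fix x assume "x \<in> t ` {1..<j}"
    then show "x \<in> {1..n}"
      using False t by (cases "x = 0") auto
  qed
  then have "\<bar>ea_pairing n s j A V k t\<bar> \<le> RA_norm n s j A (wedge_cols n V)"
    by (rule abs_ea_pairing_le_RA_norm[OF V k])
  moreover have "1 \<le> (1 + entry_abs_sum n s A)\<^sup>2"
    using entry_abs_sum_nonneg[of n s A] by (intro one_le_power) simp
  then have "RA_norm n s j A (wedge_cols n V) \<le> (1 + entry_abs_sum n s A)\<^sup>2 * RA_norm n s j A (wedge_cols n V)"
    using mult_right_mono[OF _ RA_norm_nonneg] by fastforce
  ultimately show ?thesis
    by linarith
next
  case True
  then obtain q0 where q0: "q0 \<in> {1..<j}" "t q0 = 0"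
    by auto
  show ?thesis
  proof (cases "\<exists>q \<in> {1..<j} - {q0}. t q = 0")
    case True
    then obtain q where "q \<in> {1..<j} - {q0}" "t q = 0"
      by blast
    then have "ea_pairing n s j A V k t = 0"
      unfolding ea_pairing_def using q0 by (intro det_rows_identical_rows[of q q0]) auto
    then show ?thesis
      using RA_norm_nonneg by simp
  next
    case False
    then have "t ` ({1..<j} - {q0}) \<subseteq> {1..n}"
      using t by force
    then show ?thesis
      by (rule abs_ea_pairing_le_single_e0[where t = t, OF V k \<open>s < n\<close> q0])
  qed
qed

section \<open>Change of coordinates by \<open>diag(B, I)\<close>\<close>

definition block_diag_one :: "nat \<Rightarrow> nat \<Rightarrow> 'a :: semiring_1 mat \<Rightarrow> 'a mat" where
  "block_diag_one n s B = four_block_mat B (0\<^sub>m (s+1) (n-s)) (0\<^sub>m (n-s) (s+1)) (1\<^sub>m (n-s))"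

lemma block_diag_one_carrier:
  assumes "s < n" and "B \<in> carrier_mat (s+1) (s+1)"
  shows "block_diag_one n s B \<in> carrier_mat (n+1) (n+1)"
proof -
  have "block_diag_one n s B \<in> carrier_mat (s+1 + (n-s)) (s+1 + (n-s))"
    unfolding block_diag_one_def using assms(2) by (intro four_block_carrier_mat) auto
  then show ?thesis
    using assms(1) by simp
qed

lemma block_diag_one_index:
  assumes "s < n" "B \<in> carrier_mat (s+1) (s+1)" "a \<le> n" "b \<le> n"
  shows "block_diag_one n s B $$ (a, b) = (if a \<le> s \<and> b \<le> s then B $$ (a, b) else if a = b then 1 else 0)"
  using assms unfolding block_diag_one_def by auto

lemma block_diag_one_mult:
  assumes "B \<in> carrier_mat (s+1) (s+1)" "B' \<in> carrier_mat (s+1) (s+1)"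
  shows "block_diag_one n s B * block_diag_one n s B' = block_diag_one n s (B * B')"
  unfolding block_diag_one_def using assms by (subst mult_four_block_mat[of _ "s+1" "s+1" _ "n-s"]) auto

lemma block_diag_one_one:
  "s < n \<Longrightarrow> block_diag_one n s (1\<^sub>m (s+1)) = (1\<^sub>m (n+1) :: 'a :: semiring_1 mat)"
  unfolding block_diag_one_def by simp

text \<open>Entrywise form of \<open>(I | B A) diag(B, I) = B (I | A)\<close>, the rows of \<open>(I | A)\<close> being the \<open>e\<^sub>k + a\<^sub>k\<close>.\<close>
lemma ea_vec_mult_block_diag_one:
  assumes "s < n" and A: "A \<in> carrier_mat (s+1) (n-s)" and B: "B \<in> carrier_mat (s+1) (s+1)"
    and "i \<le> s" "l \<le> n"
  shows "(\<Sum>m = 0..n. ea_vec n s (B * A) i $ m * block_diag_one n s B $$ (m, l)) =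
    (\<Sum>k = 0..s. B $$ (i, k) * ea_vec n s A k $ l)"
proof (cases "l \<le> s")
  case True
  have "(\<Sum>m = 0..n. ea_vec n s (B * A) i $ m * block_diag_one n s B $$ (m, l)) =
      (\<Sum>m = 0..n. if m = i then B $$ (i, l) else 0)"
    using assms True by (intro sum.cong) (auto simp: ea_vec_nth block_diag_one_index)
  also have "\<dots> = (\<Sum>k = 0..s. B $$ (i, k) * ea_vec n s A k $ l)"
    using assms True by (simp add: ea_vec_nth if_distrib[of "\<lambda>x. _ * x"] sum.delta cong: if_cong)
  finally show ?thesis .
next
  case False
  have "(\<Sum>m = 0..n. ea_vec n s (B * A) i $ m * block_diag_one n s B $$ (m, l)) =
      (\<Sum>m = 0..n. if m = l then (B * A) $$ (i, l - (s+1)) else 0)"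
    using assms False by (intro sum.cong) (auto simp: ea_vec_nth block_diag_one_index)
  also have "\<dots> = (\<Sum>k = 0..s. B $$ (i, k) * A $$ (k, l - (s+1)))"
    using assms False by (auto simp: scalar_prod_def atLeastLessThanSuc_atLeastAtMost intro!: sum.cong)
  also have "\<dots> = (\<Sum>k = 0..s. B $$ (i, k) * ea_vec n s A k $ l)"
    using assms False by (intro sum.cong) (auto simp: ea_vec_nth)
  finally show ?thesis .
qed

lemma ea_row_mult_block_diag_one:
  assumes "s < n" and A: "A \<in> carrier_mat (s+1) (n-s)" and B: "B \<in> carrier_mat (s+1) (s+1)"
    and V: "V \<in> carrier_mat (n+1) j" and "i \<le> s" "c < j"
  shows "ea_row n s (B * A) (block_diag_one n s B * V) i c = (\<Sum>k = 0..s. B $$ (i, k) * ea_row n s A V k c)"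
proof -
  let ?G = "block_diag_one n s B"
  have GV: "(?G * V) $$ (m, c) = (\<Sum>l = 0..n. ?G $$ (m, l) * V $$ (l, c))" if "m \<le> n" for m
    using that V \<open>c < j\<close> block_diag_one_carrier[OF \<open>s < n\<close> B]
    by (auto simp: scalar_prod_def atLeastLessThanSuc_atLeastAtMost intro!: sum.cong)
  have "ea_row n s (B * A) (?G * V) i c =
      (\<Sum>m = 0..n. \<Sum>l = 0..n. ea_vec n s (B * A) i $ m * ?G $$ (m, l) * V $$ (l, c))"
    unfolding ea_row_def by (simp add: GV sum_distrib_left mult.assoc)
  also have "\<dots> = (\<Sum>l = 0..n. (\<Sum>m = 0..n. ea_vec n s (B * A) i $ m * ?G $$ (m, l)) * V $$ (l, c))"
    by (subst sum.swap) (simp add: sum_distrib_right)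
  also have "\<dots> = (\<Sum>l = 0..n. (\<Sum>k = 0..s. B $$ (i, k) * ea_vec n s A k $ l) * V $$ (l, c))"
    using assms by (intro sum.cong refl) (simp add: ea_vec_mult_block_diag_one)
  also have "\<dots> = (\<Sum>k = 0..s. B $$ (i, k) * ea_row n s A V k c)"
    unfolding ea_row_def sum_distrib_left sum_distrib_right by (subst sum.swap) (simp add: mult.assoc)
  finally show ?thesis .
qed

lemma sqrt_sum_squares_le:
  fixes F :: "'a \<Rightarrow> 'b \<Rightarrow> real"
  assumes "\<And>i J. i \<in> X \<Longrightarrow> J \<in> Y \<Longrightarrow> \<bar>F i J\<bar> \<le> K" and "0 \<le> K"
  shows "sqrt (\<Sum>i\<in>X. \<Sum>J\<in>Y. (F i J)\<^sup>2) \<le> sqrt (real (card X * card Y)) * K"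
proof -
  have "(\<Sum>i\<in>X. \<Sum>J\<in>Y. (F i J)\<^sup>2) \<le> (\<Sum>i\<in>X. \<Sum>J\<in>Y. K\<^sup>2)"
    using assms by (intro sum_mono abs_le_square_iff[THEN iffD1]) (auto simp: abs_of_nonneg)
  also have "\<dots> = real (card X * card Y) * K\<^sup>2"
    by simp
  finally show ?thesis
    using assms(2) by (metis real_sqrt_abs real_sqrt_le_mono real_sqrt_mult abs_of_nonneg)
qed

lemma sum_abs_block_diag_one_row_le:
  fixes B :: "real mat"
  assumes "s < n" and B: "B \<in> carrier_mat (s+1) (s+1)" and "m \<le> n"
  shows "(\<Sum>l = 0..n. \<bar>block_diag_one n s B $$ (m, l)\<bar>) \<le> 1 + (\<Sum>a = 0..s. \<Sum>b = 0..s. \<bar>B $$ (a, b)\<bar>)"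
proof (cases "m \<le> s")
  case True
  have "(\<Sum>l = 0..n. \<bar>block_diag_one n s B $$ (m, l)\<bar>) = (\<Sum>b = 0..s. \<bar>B $$ (m, b)\<bar>)"
    using True assms by (intro sum.mono_neutral_cong_right) (auto simp: block_diag_one_index)
  also have "\<dots> \<le> (\<Sum>a = 0..s. \<Sum>b = 0..s. \<bar>B $$ (a, b)\<bar>)"
    using True by (intro member_le_sum[of m "{0..s}" "\<lambda>a. \<Sum>b = 0..s. \<bar>B $$ (a, b)\<bar>"] sum_nonneg) auto
  finally show ?thesis
    by simp
next
  case False
  then have "(\<Sum>l = 0..n. \<bar>block_diag_one n s B $$ (m, l)\<bar>) = 1"
    using assms by (simp add: block_diag_one_index)
  then show ?thesis
    by (simp add: sum_nonneg)
qed

lemma abs_ea_pairing_block_diag_one_le: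
  assumes "s < n" and "0 < j" and A: "A \<in> carrier_mat (s+1) (n-s)" and B: "B \<in> carrier_mat (s+1) (s+1)"
    and V: "V \<in> carrier_mat (n+1) j" and i: "i \<le> s" and J: "J \<in> multi_idx {1..n} (j - 1)"
  shows "\<bar>ea_pairing n s j (B * A) (block_diag_one n s B * V) i (sorted_idx J)\<bar> \<le>
    (1 + (\<Sum>a = 0..s. \<Sum>b = 0..s. \<bar>B $$ (a, b)\<bar>)) ^ j *
    ((1 + entry_abs_sum n s A)\<^sup>2 * RA_norm n s j A (wedge_cols n V))"
    (is "_ \<le> ?\<beta> ^ j * ?K")
proof -
  let ?G = "block_diag_one n s B"
  let ?S = "\<lambda>q. if q = 0 then {0..s} else {0..n}"
  let ?a = "\<lambda>q m. if q = 0 then B $$ (i, m) else ?G $$ (sorted_idx J q, m)"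
  let ?h = "\<lambda>q m c. if q = 0 then ea_row n s A V m c else V $$ (m, c)"
  have K: "0 \<le> ?K"
    by (simp add: RA_norm_nonneg)
  have G: "?G \<in> carrier_mat (n+1) (n+1)"
    by (rule block_diag_one_carrier[OF assms(1) B])
  have "\<bar>ea_pairing n s j (B * A) (?G * V) i (sorted_idx J)\<bar> \<le> (\<Prod>q = 0..<j. \<Sum>m\<in>?S q. \<bar>?a q m\<bar>) * ?K"
    unfolding ea_pairing_def
  proof (rule abs_det_rows_le_multilinear)
    fix q c assume "q < j" "c < j"
    show "(if q = 0 then ea_row n s (B * A) (?G * V) i c else (?G * V) $$ (sorted_idx J q, c)) =
        (\<Sum>m\<in>?S q. ?a q m * ?h q m c)"
    proof (cases "q = 0")
      case False
      then have "sorted_idx J q \<le> n"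
        using sorted_idx_mem[OF J] \<open>q < j\<close> by simp
      then show ?thesis
        using False G V \<open>c < j\<close> by (auto simp: scalar_prod_def atLeastLessThanSuc_atLeastAtMost intro!: sum.cong)
    qed (use ea_row_mult_block_diag_one[OF assms(1) A B V i \<open>c < j\<close>] in simp)
  next
    fix f assume f: "f \<in> Pi\<^sub>E {0..<j} ?S"
    have "det_rows j (\<lambda>q. ?h q (f q)) = ea_pairing n s j A V (f 0) f"
      unfolding ea_pairing_def by (rule det_rows_cong) simp
    moreover have "f 0 \<le> s"
      using PiE_mem[OF f, of 0] \<open>0 < j\<close> by simp
    moreover have "f q \<in> {0..n}" if "q \<in> {1..<j}" for q
      using PiE_mem[OF f, of q] that by simp
    then have "f ` {1..<j} \<subseteq> {0..n}"
      by auto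
    ultimately show "\<bar>det_rows j (\<lambda>q. ?h q (f q))\<bar> \<le> ?K"
      using abs_ea_pairing_le[OF V _ assms(1)] by simp
  qed simp
  also have "(\<Prod>q = 0..<j. \<Sum>m\<in>?S q. \<bar>?a q m\<bar>) \<le> ?\<beta> ^ j"
  proof (rule prod_le_power)
    have "(\<Sum>b = 0..s. \<bar>B $$ (i, b)\<bar>) \<le> (\<Sum>a = 0..s. \<Sum>b = 0..s. \<bar>B $$ (a, b)\<bar>)"
      using i by (intro member_le_sum[of i "{0..s}" "\<lambda>a. \<Sum>b = 0..s. \<bar>B $$ (a, b)\<bar>"] sum_nonneg) auto
    then show "0 \<le> (\<Sum>m\<in>?S q. \<bar>?a q m\<bar>) \<and> (\<Sum>m\<in>?S q. \<bar>?a q m\<bar>) \<le> ?\<beta>" if "q \<in> {0..<j}" for q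
      using that sorted_idx_mem[OF J] sum_abs_block_diag_one_row_le[OF assms(1) B]
      by (auto simp: sum_nonneg)
  qed (auto simp: sum_nonneg)
  finally show ?thesis
    using K by (simp add: mult_right_mono)
qed

lemma RA_norm_block_diag_one_le:
  assumes "s < n" and "0 < j" and A: "A \<in> carrier_mat (s+1) (n-s)" and B: "B \<in> carrier_mat (s+1) (s+1)"
  shows "\<exists>C. \<forall>V \<in> carrier_mat (n+1) j.
    RA_norm n s j (B * A) (wedge_cols n (block_diag_one n s B * V)) \<le> C * RA_norm n s j A (wedge_cols n V)"
proof (intro exI ballI)
  let ?G = "block_diag_one n s B" and ?M = "multi_idx {1..n} (j - 1)"
  let ?\<beta> = "1 + (\<Sum>a = 0..s. \<Sum>b = 0..s. \<bar>B $$ (a, b)\<bar>)"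
  fix V :: "real mat" assume V: "V \<in> carrier_mat (n+1) j"
  let ?K = "(1 + entry_abs_sum n s A)\<^sup>2 * RA_norm n s j A (wedge_cols n V)"
  have "sqrt (\<Sum>i = 0..s. \<Sum>J\<in>?M. (ea_pairing n s j (B * A) (?G * V) i (sorted_idx J))\<^sup>2)
      \<le> sqrt (real (card {0..s} * card ?M)) * (?\<beta> ^ j * ?K)"
    using abs_ea_pairing_block_diag_one_le[OF assms V] by (intro sqrt_sum_squares_le) (auto simp: RA_norm_nonneg sum_nonneg)
  then show "RA_norm n s j (B * A) (wedge_cols n (?G * V)) \<le>
      (sqrt (real ((s+1) * card ?M)) * ?\<beta> ^ j * (1 + entry_abs_sum n s A)\<^sup>2) * RA_norm n s j A (wedge_cols n V)"
    using block_diag_one_carrier[OF assms(1) B] V by (simp add: RA_norm_wedge_cols mult.assoc)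
qed

lemma common_denominator:
  fixes X :: "rat set"
  assumes "finite X"
  shows "\<exists>d :: int. 0 < d \<and> (\<forall>x\<in>X. of_int d * x \<in> \<int>)"
proof (intro exI conjI ballI)
  let ?den = "\<lambda>x. snd (quotient_of x)"
  show "0 < (\<Prod>x\<in>X. ?den x)"
    by (rule prod_pos) (simp add: quotient_of_denom_pos')
  fix x assume x: "x \<in> X"
  obtain p q where pq: "quotient_of x = (p, q)"
    by (cases "quotient_of x")
  have "of_int q * x = of_int p"
    using quotient_of_div[OF pq] quotient_of_denom_pos[OF pq] by simp
  then have "of_int (\<Prod>x\<in>X. ?den x) * x = of_int ((\<Prod>y\<in>X - {x}. ?den y) * p)"
    using pq by (simp add: prod.remove[OF assms x] mult_ac)
  then show "of_int (\<Prod>x\<in>X. ?den x) * x \<in> \<int>"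
    by (simp only: Ints_of_int)
qed

lemma map_mat_of_int_floor:
  fixes M :: "real mat"
  assumes "\<And>a b. a < dim_row M \<Longrightarrow> b < dim_col M \<Longrightarrow> M $$ (a, b) \<in> \<int>"
  shows "map_mat real_of_int (map_mat floor M) = M"
  using assms by (intro eq_matI) auto

lemma wedge_cols_smult:
  assumes "M \<in> carrier_mat (n+1) j"
  shows "wedge_cols n (c \<cdot>\<^sub>m M) I = c ^ j * wedge_cols n M I"
proof (cases "I \<in> multi_idx {0..n} j")
  case True
  then have I: "I \<subseteq> {0..<n+1}" "card I = j"
    by (auto simp: multi_idx_def)
  have cM: "c \<cdot>\<^sub>m M \<in> carrier_mat (n+1) j"
    using assms by simp
  have "pick I q < n+1" if "q < j" for q
    using pick_in_set_le[of q I] that I by auto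
  then have "submatrix (c \<cdot>\<^sub>m M) I UNIV = c \<cdot>\<^sub>m submatrix M I UNIV"
    unfolding submatrix_rows_eq[OF cM I] submatrix_rows_eq[OF assms I] using assms by (auto intro!: eq_matI)
  then show ?thesis
    using assms True I by (simp add: wedge_cols_def submatrix_rows_eq)
qed (use assms in \<open>simp add: wedge_cols_def\<close>)

lemma ext_norm_scale: "ext_norm n j (\<lambda>I. c * x I) = \<bar>c\<bar> * ext_norm n j x"
proof -
  have "ext_inner n j (\<lambda>I. c * x I) (\<lambda>I. c * x I) = c\<^sup>2 * ext_inner n j x x"
    unfolding ext_inner_def by (simp add: sum_distrib_left power2_eq_square mult_ac)
  then show ?thesis
    unfolding ext_norm_def by (simp add: real_sqrt_mult)
qed

lemma RA_norm_scale: "RA_norm n s j A (\<lambda>I. c * w I) = \<bar>c\<bar> * RA_norm n s j A w"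
proof -
  have "ext_inner n j v (\<lambda>I. c * w I) = c * ext_inner n j v w" for v
    unfolding ext_inner_def by (simp add: sum_distrib_left mult_ac)
  then show ?thesis
    unfolding RA_norm_def by (simp add: power_mult_distrib real_sqrt_mult flip: sum_distrib_left)
qed

lemma proj_bullet_wedge_block_diag_one:
  assumes "s < n" and B: "B \<in> carrier_mat (s+1) (s+1)" and V: "V \<in> carrier_mat (n+1) j"
  shows "proj_bullet n s (wedge_cols n (block_diag_one n s B * V)) = proj_bullet n s (wedge_cols n V)"
proof
  fix I
  let ?G = "block_diag_one n s B"
  have GV: "?G * V \<in> carrier_mat (n+1) j"
    using block_diag_one_carrier[OF assms(1) B] V by simp
  show "proj_bullet n s (wedge_cols n (?G * V)) I = proj_bullet n s (wedge_cols n V) I"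
  proof (cases "I \<subseteq> {s+1..n} \<and> I \<in> multi_idx {0..n} j")
    case True
    then have I: "I \<subseteq> {0..<n+1}" "card I = j" "I \<subseteq> {s+1..n}"
      by (auto simp: multi_idx_def)
    have pick: "pick I q \<in> {s+1..n}" if "q < j" for q
      using pick_in_set_le[of q I] that I by auto
    have "(?G * V) $$ (pick I q, c) = V $$ (pick I q, c)" if "q < j" "c < j" for q c
    proof -
      have "(?G * V) $$ (pick I q, c) = (\<Sum>l = 0..n. ?G $$ (pick I q, l) * V $$ (l, c))"
        using pick[OF \<open>q < j\<close>] V \<open>c < j\<close> block_diag_one_carrier[OF assms(1) B]
        by (auto simp: scalar_prod_def atLeastLessThanSuc_atLeastAtMost intro!: sum.cong)
      also have "\<dots> = V $$ (pick I q, c)"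
        using pick[OF \<open>q < j\<close>] assms(1) B by (simp add: block_diag_one_index if_distrib[of "\<lambda>x. x * _"] cong: if_cong)
      finally show ?thesis .
    qed
    then have "submatrix (?G * V) I UNIV = submatrix V I UNIV"
      by (auto simp: submatrix_rows_eq[OF GV I(1,2)] submatrix_rows_eq[OF V I(1,2)])
    then show ?thesis
      using GV V by (simp add: proj_bullet_def wedge_cols_def)
  qed (use GV V in \<open>auto simp: proj_bullet_def wedge_cols_def\<close>)
qed

lemma cols_lin_indep_mult_left_invertible:
  fixes L M V :: "real mat"
  assumes "L \<in> carrier_mat N N" "M \<in> carrier_mat N N" "L * M = 1\<^sub>m N" and V: "V \<in> carrier_mat N j"
    and "cols_lin_indep V"
  shows "cols_lin_indep (M * V)"
  unfolding cols_lin_indep_def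
proof (intro ballI impI)
  fix c assume c: "c \<in> carrier_vec (dim_col (M * V))" and "M * V *\<^sub>v c = 0\<^sub>v (dim_row (M * V))"
  then have "M *\<^sub>v (V *\<^sub>v c) = 0\<^sub>v N"
    using assms V by (simp add: assoc_mult_mat_vec)
  have Vc: "V *\<^sub>v c \<in> carrier_vec N"
    using c V by (intro mult_mat_vec_carrier[OF V]) simp
  have "V *\<^sub>v c = (L * M) *\<^sub>v (V *\<^sub>v c)"
    using Vc assms(3) by simp
  also have "\<dots> = L *\<^sub>v (M *\<^sub>v (V *\<^sub>v c))"
    using assms(1,2) Vc by (rule assoc_mult_mat_vec)
  also have "\<dots> = 0\<^sub>v N"
    using \<open>M *\<^sub>v (V *\<^sub>v c) = 0\<^sub>v N\<close> assms(1) by (auto intro!: eq_vecI)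
  finally have "V *\<^sub>v c = 0\<^sub>v N" .
  then show "c = 0\<^sub>v (dim_col (M * V))"
    using assms c V unfolding cols_lin_indep_def by simp
qed

lemma invertible_matE:
  fixes B :: "'a :: semiring_1 mat"
  assumes "B \<in> carrier_mat m m" and "invertible_mat B"
  obtains B' where "B' \<in> carrier_mat m m" "B * B' = 1\<^sub>m m" "B' * B = 1\<^sub>m m"
proof -
  obtain B' where BB': "B * B' = 1\<^sub>m (dim_row B)" and B'B: "B' * B = 1\<^sub>m (dim_row B')"
    using assms(2) unfolding invertible_mat_def inverts_mat_def by blast
  have "dim_row B' = m" and "dim_col B' = m"
    using arg_cong[OF BB', of dim_col] arg_cong[OF B'B, of dim_row] arg_cong[OF B'B, of dim_col] assms(1)
    by auto
  then show ?thesis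
    using that BB' B'B assms(1) by auto
qed

lemma integral_multiple_block_diag_one:
  fixes B :: "rat mat"
  assumes "s < n" and B: "B \<in> carrier_mat (s+1) (s+1)"
  obtains d :: int and Z :: "int mat" where "0 < d" and "Z \<in> carrier_mat (n+1) (n+1)"
    and "map_mat real_of_int Z = real_of_int d \<cdot>\<^sub>m block_diag_one n s (map_mat of_rat B)"
proof -
  let ?G = "block_diag_one n s (map_mat of_rat B) :: real mat"
  have G: "?G \<in> carrier_mat (n+1) (n+1)"
    using B by (intro block_diag_one_carrier[OF assms(1)]) simp
  obtain d :: int where d: "0 < d" and dB: "\<forall>x \<in> (\<lambda>(a, b). B $$ (a, b)) ` ({..s} \<times> {..s}). of_int d * x \<in> \<int>"
    using common_denominator[of "(\<lambda>(a, b). B $$ (a, b)) ` ({..s} \<times> {..s})"] by blast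
  have "map_mat real_of_int (map_mat floor (real_of_int d \<cdot>\<^sub>m ?G)) = real_of_int d \<cdot>\<^sub>m ?G"
  proof (rule map_mat_of_int_floor)
    fix a b assume "a < dim_row (real_of_int d \<cdot>\<^sub>m ?G)" "b < dim_col (real_of_int d \<cdot>\<^sub>m ?G)"
    then have ab: "a \<le> n" "b \<le> n"
      using G by auto
    show "(real_of_int d \<cdot>\<^sub>m ?G) $$ (a, b) \<in> \<int>"
    proof (cases "a \<le> s \<and> b \<le> s")
      case True
      then have "of_int d * B $$ (a, b) \<in> \<int>"
        using dB by auto
      then have "of_rat (of_int d * B $$ (a, b)) \<in> (\<int> :: real set)"
        by (auto elim!: Ints_cases)
      then show ?thesis
        using True ab G B assms(1) by (simp add: block_diag_one_index of_rat_mult)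
    qed (use ab G B assms(1) in \<open>auto simp: block_diag_one_index\<close>)
  qed
  moreover have "map_mat floor (real_of_int d \<cdot>\<^sub>m ?G) \<in> carrier_mat (n+1) (n+1)"
    using G by simp
  ultimately show ?thesis
    using that d by blast
qed

lemma left_inverse_smult_block_diag_one:
  fixes B :: "rat mat" and c :: real
  assumes "s < n" and B: "B \<in> carrier_mat (s+1) (s+1)" and "invertible_mat B" and "c \<noteq> 0"
  obtains L where "L \<in> carrier_mat (n+1) (n+1)"
    and "L * (c \<cdot>\<^sub>m block_diag_one n s (map_mat of_rat B)) = 1\<^sub>m (n+1)"
proof -
  let ?G = "block_diag_one n s (map_mat of_rat B) :: real mat"
  obtain B' where B': "B' \<in> carrier_mat (s+1) (s+1)" "B' * B = 1\<^sub>m (s+1)"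
    using invertible_matE[OF B \<open>invertible_mat B\<close>] by metis
  let ?G' = "block_diag_one n s (map_mat of_rat B') :: real mat"
  have G: "?G \<in> carrier_mat (n+1) (n+1)"
    using B by (intro block_diag_one_carrier[OF assms(1)]) simp
  have G': "?G' \<in> carrier_mat (n+1) (n+1)"
    using B' by (intro block_diag_one_carrier[OF assms(1)]) simp
  have "?G' * ?G = block_diag_one n s (map_mat of_rat B' * map_mat of_rat B)"
    using B' B by (intro block_diag_one_mult) auto
  also have "map_mat of_rat B' * map_mat of_rat B = (map_mat of_rat (B' * B) :: real mat)"
    using B' B by (intro of_rat_hom.mat_hom_mult[symmetric]) auto
  also have "\<dots> = 1\<^sub>m (s+1)"
    using B' by (simp add: of_rat_hom.mat_hom_one)
  finally have G'G: "?G' * ?G = 1\<^sub>m (n+1)"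
    using block_diag_one_one[OF assms(1)] by simp
  have "((1 / c) \<cdot>\<^sub>m ?G') * (c \<cdot>\<^sub>m ?G) = (1 / c) \<cdot>\<^sub>m (?G' * (c \<cdot>\<^sub>m ?G))"
    by (rule mult_smult_assoc_mat[OF G' smult_carrier_mat[OF G]])
  also have "\<dots> = (1 / c) \<cdot>\<^sub>m (c \<cdot>\<^sub>m (?G' * ?G))"
    by (simp only: mult_smult_distrib[OF G' G])
  also have "\<dots> = 1\<^sub>m (n+1)"
    using \<open>c \<noteq> 0\<close> by (intro eq_matI) (auto simp: G'G)
  finally show ?thesis
    by (rule that[OF smult_carrier_mat[OF G']])
qed

lemma wedge_cols_mult_in_S_set:
  assumes Z: "Z \<in> carrier_mat (n+1) (n+1)" and "L \<in> carrier_mat (n+1) (n+1)"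
    and "L * map_mat real_of_int Z = 1\<^sub>m (n+1)" and V: "V \<in> carrier_mat (n+1) j"
    and "cols_lin_indep (map_mat real_of_int V)"
  shows "wedge_cols n (map_mat real_of_int (Z * V)) \<in> S_set n j"
proof -
  have "cols_lin_indep (map_mat real_of_int Z * map_mat real_of_int V)"
    using assms by (intro cols_lin_indep_mult_left_invertible[where L = L]) auto
  then have "cols_lin_indep (map_mat real_of_int (Z * V))"
    by (simp add: of_int_hom.mat_hom_mult[OF Z V])
  then show ?thesis
    unfolding S_set_def using Z V by (intro CollectI exI[of _ "Z * V"]) simp
qed

lemma approximation_transfer:
  fixes A :: "real mat" and B :: "rat mat"
  assumes "s < n" and "0 < j" and A: "A \<in> carrier_mat (s+1) (n-s)"
    and B: "B \<in> carrier_mat (s+1) (s+1)" and "invertible_mat B"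
  shows "\<exists>\<kappa> C. 1 \<le> \<kappa> \<and> 0 < C \<and> (\<forall>w\<in>S_set n j. \<exists>w'\<in>S_set n j.
    ext_norm n j (proj_bullet n s w') = \<kappa> * ext_norm n j (proj_bullet n s w) \<and>
    RA_norm n s j (map_mat of_rat B * A) w' \<le> C * RA_norm n s j A w)"
proof -
  let ?Br = "map_mat of_rat B :: real mat"
  let ?G = "block_diag_one n s ?Br"
  have Br: "?Br \<in> carrier_mat (s+1) (s+1)"
    using B by simp
  then have G: "?G \<in> carrier_mat (n+1) (n+1)"
    by (rule block_diag_one_carrier[OF assms(1)])
  text \<open>\<open>d G\<close> is integral, so it preserves \<open>S\<^bsub>n+1,j\<^esub>\<close>; on \<open>V\<^sub>\<bullet>\<close> it is multiplication by \<open>d\<close>.\<close>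
  obtain d Z where d: "0 < d" and Z: "Z \<in> carrier_mat (n+1) (n+1)"
    and ZG: "map_mat real_of_int Z = real_of_int d \<cdot>\<^sub>m ?G"
    using integral_multiple_block_diag_one[OF assms(1) B] by blast
  obtain L where L: "L \<in> carrier_mat (n+1) (n+1)" "L * map_mat real_of_int Z = 1\<^sub>m (n+1)"
    using left_inverse_smult_block_diag_one[OF assms(1) B \<open>invertible_mat B\<close>, of "real_of_int d"] d
    unfolding ZG by auto
  obtain C where C: "\<forall>V \<in> carrier_mat (n+1) j.
      RA_norm n s j (?Br * A) (wedge_cols n (?G * V)) \<le> C * RA_norm n s j A (wedge_cols n V)"
    using RA_norm_block_diag_one_le[OF assms(1,2) A Br] by blast
  let ?\<kappa> = "real_of_int d ^ j"
  have \<kappa>: "1 \<le> ?\<kappa>"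
    using d by simp
  have "\<exists>w'\<in>S_set n j. ext_norm n j (proj_bullet n s w') = ?\<kappa> * ext_norm n j (proj_bullet n s w) \<and>
      RA_norm n s j (?Br * A) w' \<le> ?\<kappa> * (\<bar>C\<bar> + 1) * RA_norm n s j A w"
    if "w \<in> S_set n j" for w
  proof -
    obtain V where w: "w = wedge_cols n (map_mat real_of_int V)" and V: "V \<in> carrier_mat (n+1) j"
      and indep: "cols_lin_indep (map_mat real_of_int V)"
      using \<open>w \<in> S_set n j\<close> unfolding S_set_def by blast
    let ?V = "map_mat real_of_int V"
    have Vr: "?V \<in> carrier_mat (n+1) j"
      using V by simp
    have w': "wedge_cols n (map_mat real_of_int (Z * V)) = (\<lambda>I. ?\<kappa> * wedge_cols n (?G * ?V) I)"
      using wedge_cols_smult[of "?G * ?V"] G Vr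
      by (simp add: of_int_hom.mat_hom_mult[OF Z V] ZG mult_smult_assoc_mat[OF G Vr] fun_eq_iff)
    have "proj_bullet n s (wedge_cols n (map_mat real_of_int (Z * V))) =
        (\<lambda>I. ?\<kappa> * proj_bullet n s (wedge_cols n (?G * ?V)) I)"
      unfolding w' proj_bullet_def by auto
    also have "\<dots> = (\<lambda>I. ?\<kappa> * proj_bullet n s w I)"
      unfolding w proj_bullet_wedge_block_diag_one[OF assms(1) Br Vr] ..
    finally have height: "ext_norm n j (proj_bullet n s (wedge_cols n (map_mat real_of_int (Z * V)))) =
        ?\<kappa> * ext_norm n j (proj_bullet n s w)"
      using \<kappa> by (simp add: ext_norm_scale)
    have "RA_norm n s j (?Br * A) (wedge_cols n (map_mat real_of_int (Z * V))) =
        ?\<kappa> * RA_norm n s j (?Br * A) (wedge_cols n (?G * ?V))"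
      using \<kappa> by (simp add: w' RA_norm_scale)
    also have "\<dots> \<le> ?\<kappa> * (C * RA_norm n s j A w)"
      using C Vr \<kappa> unfolding w by (intro mult_left_mono) auto
    also have "\<dots> \<le> ?\<kappa> * ((\<bar>C\<bar> + 1) * RA_norm n s j A w)"
      using \<kappa> RA_norm_nonneg[of n s j A w] by (intro mult_left_mono mult_right_mono) auto
    finally have "RA_norm n s j (?Br * A) (wedge_cols n (map_mat real_of_int (Z * V))) \<le>
        ?\<kappa> * (\<bar>C\<bar> + 1) * RA_norm n s j A w"
      by (simp add: mult.assoc)
    with height show ?thesis
      using wedge_cols_mult_in_S_set[OF Z L V indep] by blast
  qed
  moreover have "0 < ?\<kappa> * (\<bar>C\<bar> + 1)"
    using d by simp
  ultimately show ?thesis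
    using \<kappa> by blast
qed

section \<open>Transfer of approximation exponents\<close>

lemma exponent_transfer:
  fixes h r r' :: "'a \<Rightarrow> real"
  assumes \<kappa>: "1 \<le> \<kappa>" and C: "0 < C"
    and transfer: "\<forall>w\<in>S. \<exists>w'\<in>S. h w' = \<kappa> * h w \<and> r' w' \<le> C * r w"
    and "e < e'"
    and approx: "\<forall>M. \<exists>w\<in>S. M < h w \<and> r w < h w powr e"
  shows "\<forall>M. \<exists>w\<in>S. M < h w \<and> r' w < h w powr e'"
proof
  fix M :: real
  define \<delta> where "\<delta> = e' - e"
  define K where "K = C * \<kappa> powr (- e')"
  have \<delta>: "0 < \<delta>" and K: "0 < K"
    using \<open>e < e'\<close> C \<kappa> by (simp_all add: \<delta>_def K_def)
  obtain w where w: "w \<in> S" and H: "max (max M 1) (K powr (1 / \<delta>)) < h w" and r: "r w < h w powr e"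
    using approx by blast
  obtain w' where w': "w' \<in> S" and h': "h w' = \<kappa> * h w" and r': "r' w' \<le> C * r w"
    using transfer w by blast
  have "M < h w" and "1 < h w"
    using H by simp_all
  have "h w \<le> \<kappa> * h w"
    using \<kappa> \<open>1 < h w\<close> by (simp add: mult_le_cancel_right1)
  then have "M < h w'"
    using \<open>M < h w\<close> h' by linarith
  text \<open>The constant loss \<open>K\<close> is absorbed by the margin \<open>h w powr \<delta>\<close> once \<open>h w\<close> is large.\<close>
  have "K = (K powr (1 / \<delta>)) powr \<delta>"
    using K \<delta> by (simp add: powr_powr)
  also have "\<dots> \<le> h w powr \<delta>"
    using H K \<delta> by (intro powr_mono2) auto
  finally have K_le: "K \<le> h w powr \<delta>" .
  have "r' w' < C * h w powr e"
    using r' mult_strict_left_mono[OF r C] by linarith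
  also have "C * h w powr e = \<kappa> powr e' * h w powr e * K"
    using \<kappa> by (simp add: K_def powr_minus field_simps)
  also have "\<dots> \<le> \<kappa> powr e' * h w powr e * h w powr \<delta>"
    using K_le by (intro mult_left_mono) auto
  also have "\<dots> = h w' powr e'"
    using \<kappa> \<open>1 < h w\<close> by (simp add: h' \<delta>_def powr_mult mult.assoc flip: powr_add)
  finally show "\<exists>w\<in>S. M < h w \<and> r' w < h w powr e'"
    using w' \<open>M < h w'\<close> by blast
qed

lemma Sup_ereal_le_Sup_ereal_dense:
  assumes "\<And>v u. P v \<Longrightarrow> u < v \<Longrightarrow> Q u"
  shows "Sup {ereal v | v. P v} \<le> Sup {ereal v | v. Q v}"
proof (rule Sup_least)
  fix x assume "x \<in> {ereal v | v. P v}"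
  then obtain v where x: "x = ereal v" and "P v"
    by blast
  show "x \<le> Sup {ereal v | v. Q v}"
    unfolding x
  proof (rule dense_le)
    fix y assume "y < ereal v"
    then obtain u where "y < ereal u" and "u < v"
      using ereal_dense2 by fastforce
    then have "ereal u \<le> Sup {ereal v | v. Q v}"
      using assms[OF \<open>P v\<close>] by (intro Sup_upper) blast
    then show "y \<le> Sup {ereal v | v. Q v}"
      using \<open>y < ereal u\<close> by simp
  qed
qed

lemma omega_le_omega:
  assumes "0 < j" and "1 \<le> \<kappa>" and "0 < C"
    and transfer: "\<forall>w\<in>S_set n j. \<exists>w'\<in>S_set n j.
      ext_norm n j (proj_bullet n s w') = \<kappa> * ext_norm n j (proj_bullet n s w) \<and>
      RA_norm n s j A' w' \<le> C * RA_norm n s j A w"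
  shows "omega n s j A \<le> omega n s j A'"
  unfolding omega_def
proof (rule Sup_ereal_le_Sup_ereal_dense)
  fix v u :: real
  assume approx: "\<forall>M. \<exists>w\<in>S_set n j. M < ext_norm n j (proj_bullet n s w) \<and>
      RA_norm n s j A w < ext_norm n j (proj_bullet n s w) powr (- (v + 1 - real j) / real j)"
    and "u < v"
  have "- (v + 1 - real j) / real j < - (u + 1 - real j) / real j"
    using \<open>u < v\<close> \<open>0 < j\<close> by (simp add: divide_strict_right_mono)
  from exponent_transfer[OF assms(2,3) transfer this approx]
  show "\<forall>M. \<exists>w\<in>S_set n j. M < ext_norm n j (proj_bullet n s w) \<and>
      RA_norm n s j A' w < ext_norm n j (proj_bullet n s w) powr (- (u + 1 - real j) / real j)" .
qed

lemma omega_le_omega_mult: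
  fixes A :: "real mat" and B :: "rat mat"
  assumes "s < n" and "0 < j" and "A \<in> carrier_mat (s+1) (n-s)"
    and "B \<in> carrier_mat (s+1) (s+1)" and "invertible_mat B"
  shows "omega n s j A \<le> omega n s j (map_mat of_rat B * A)"
proof -
  obtain \<kappa> C where "1 \<le> \<kappa>" "0 < C" and "\<forall>w\<in>S_set n j. \<exists>w'\<in>S_set n j.
      ext_norm n j (proj_bullet n s w') = \<kappa> * ext_norm n j (proj_bullet n s w) \<and>
      RA_norm n s j (map_mat of_rat B * A) w' \<le> C * RA_norm n s j A w"
    using approximation_transfer[OF assms] by blast
  then show ?thesis
    by (rule omega_le_omega[OF \<open>0 < j\<close>])
qed

theorem lemma5p6:
  fixes n s :: nat and A :: "real mat" and B :: "rat mat"
  assumes "s < n"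
    and "A \<in> carrier_mat (s+1) (n-s)"
    and "B \<in> carrier_mat (s+1) (s+1)"
    and "invertible_mat B"
  shows "\<forall>j\<in>{1..n-s}. omega n s j (map_mat of_rat B * A) = omega n s j A"
proof
  fix j assume "j \<in> {1..n-s}"
  then have j: "0 < j"
    by simp
  obtain B\<^sub>1 where B\<^sub>1: "B\<^sub>1 \<in> carrier_mat (s+1) (s+1)" "B * B\<^sub>1 = 1\<^sub>m (s+1)" "B\<^sub>1 * B = 1\<^sub>m (s+1)"
    using invertible_matE[OF assms(3,4)] by metis
  then have "invertible_mat B\<^sub>1"
    using assms(3) unfolding invertible_mat_def inverts_mat_def by auto
  have BA: "map_mat of_rat B * A \<in> carrier_mat (s+1) (n-s)"
    using assms(2,3) by simp
  have "map_mat of_rat B\<^sub>1 * (map_mat of_rat B * A) = (map_mat of_rat B\<^sub>1 * map_mat of_rat B) * A"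
    using assms(2,3) B\<^sub>1 by (intro assoc_mult_mat[symmetric]) auto
  also have "\<dots> = map_mat of_rat (B\<^sub>1 * B) * A"
    by (simp only: of_rat_hom.mat_hom_mult[OF B\<^sub>1(1) assms(3)])
  finally have cancel: "map_mat of_rat B\<^sub>1 * (map_mat of_rat B * A) = A"
    using assms(2) B\<^sub>1 by (simp add: of_rat_hom.mat_hom_one)
  show "omega n s j (map_mat of_rat B * A) = omega n s j A"
    using omega_le_omega_mult[OF assms(1) j assms(2-4)]
      omega_le_omega_mult[OF assms(1) j BA B\<^sub>1(1) \<open>invertible_mat B\<^sub>1\<close>]
    unfolding cancel by (rule antisym[rotated])
qed

end
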